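(* The functor $\Theta:\mathbf{FinGraph}^l_\star\to\mathbf{FinArb}^<_\star$ (defined below) is well-defined: for every connected, finite, pointed, edge-ordered graph $G$, $\Theta(G)$ is a finite edge-ordered arborescence, and for every lex-homomorphism $h:G\to H$, $\Theta(h)$ is a homomorphism of pointed edge-ordered graphs $\Theta(G)\to\Theta(H)$.
   Context: A (directed) graph is $(V,\to)$ with $\to\subseteq V\times V$; $N(u)$ is the set of outgoing edges of $u$. A pointed graph has a distinguished vertex $v_0$; connected means every vertex is reachable by a path from $v_0$. A path is a finite sequence $v_1\to\cdots\to v_n$ of vertices joined by edges; proper if no vertex repeats; co-initial paths share their source; $\pi\sqsubset\sigma$ means $\pi$ is a proper prefix of $\sigma$. A finite edge-ordered graph is a finite graph with a strict linear order $\triangleleft$ on each neighborhood. Lexicographic path order: if $\pi\sqsubset\sigma$ then $\pi\prec\sigma$ (symmetrically); otherwise, with $\zeta$ the longest common prefix, $u$ its target and $v_1,v_2$ the next vertices, $\pi\prec\sigma$ iff $u\to v_1\triangleleft u\to v_2$. $\min(u\rightsquigarrow v)$ is the $\prec$-least proper path from $u$ to $v$. A homomorphism of finite pointed edge-ordered graphs $h:G\to H$ is a vertex map with (i) $u\to v$ implies $h(u)\to h(v)$; (ii) the distinguished vertex of $G$ is the unique vertex mapped to the distinguished vertex of $H$; (iii) $u\to v_1\triangleleft u\to v_2$ implies $h(u)\to h(v_1)\triangleleft h(u)\to h(v_2)$. A lex-homomorphism additionally satisfies (iv) $h(\min(u\rightsquigarrow v))=\min(h(u)\rightsquigarrow h(v))$,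 where $h$ is applied to paths vertexwise. An arborescence is a pointed graph with a unique path $v_0\rightsquigarrow u$ for every vertex $u$. $\mathbf{FinGraph}^l_\star$: connected, finite, pointed, edge-ordered graphs with lex-homomorphisms; $\mathbf{FinArb}^<_\star$: finite edge-ordered arborescences with homomorphisms of pointed edge-ordered graphs. $\Theta(G)$ has the vertices and distinguished vertex of $G$, contains an edge $u\to v$ iff $u\to v$ is an edge of $\min(v_0\rightsquigarrow v)$ in $G$, and orders co-initial edges as in $G$; $\Theta(h)(v)=h(v)$. *)

theory Defs
  imports Main "HOL-Library.Sublist"
begin

text \<open>A pointed edge-ordered graph. The edge order on the neighbourhood N(u)
  is represented by a relation on targets: eord G u v1 v2 means
  that edge u->v1 precedes edge u->v2.\<close>
record 'a eograph =
  verts :: "'a set"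
  arcs  :: "('a \<times> 'a) set"
  root  :: 'a
  eord  :: "'a \<Rightarrow> 'a \<Rightarrow> 'a \<Rightarrow> bool"

definition nbhd :: "('a, 'b) eograph_scheme \<Rightarrow> 'a \<Rightarrow> 'a set" where
  "nbhd G u = {v. (u, v) \<in> arcs G}"

definition strict_linear_on :: "'a set \<Rightarrow> ('a \<Rightarrow> 'a \<Rightarrow> bool) \<Rightarrow> bool" where
  "strict_linear_on A r \<longleftrightarrow>
     (\<forall>x\<in>A. \<not> r x x) \<and>
     (\<forall>x\<in>A. \<forall>y\<in>A. \<forall>z\<in>A. r x y \<longrightarrow> r y z \<longrightarrow> r x z) \<and>
     (\<forall>x\<in>A. \<forall>y\<in>A. x \<noteq> y \<longrightarrow> r x y \<or> r y x)"

definition pointed_eo_graph :: "('a, 'b) eograph_scheme \<Rightarrow> bool" where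
  "pointed_eo_graph G \<longleftrightarrow>
     arcs G \<subseteq> verts G \<times> verts G \<and> root G \<in> verts G \<and>
     (\<forall>u v1 v2. eord G u v1 v2 \<longrightarrow> (u, v1) \<in> arcs G \<and> (u, v2) \<in> arcs G) \<and>
     (\<forall>u\<in>verts G. strict_linear_on (nbhd G u) (eord G u))"

definition is_path :: "('a, 'b) eograph_scheme \<Rightarrow> 'a list \<Rightarrow> bool" where
  "is_path G p \<longleftrightarrow> p \<noteq> [] \<and> set p \<subseteq> verts G \<and>
     (\<forall>i. Suc i < length p \<longrightarrow> (p ! i, p ! Suc i) \<in> arcs G)"

definition paths_from_to :: "('a, 'b) eograph_scheme \<Rightarrow> 'a \<Rightarrow> 'a \<Rightarrow> 'a list set" where
  "paths_from_to G u v = {p. is_path G p \<and> hd p = u \<and> last p = v}"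

definition proper_paths :: "('a, 'b) eograph_scheme \<Rightarrow> 'a \<Rightarrow> 'a \<Rightarrow> 'a list set" where
  "proper_paths G u v = {p \<in> paths_from_to G u v. distinct p}"

definition connected_graph :: "('a, 'b) eograph_scheme \<Rightarrow> bool" where
  "connected_graph G \<longleftrightarrow> (\<forall>v\<in>verts G. paths_from_to G (root G) v \<noteq> {})"

definition path_less :: "('a, 'b) eograph_scheme \<Rightarrow> 'a list \<Rightarrow> 'a list \<Rightarrow> bool" where
  "path_less G p q \<longleftrightarrow> strict_prefix p q \<or>
     (\<exists>z v1 v2 r1 r2. z \<noteq> [] \<and> p = z @ v1 # r1 \<and> q = z @ v2 # r2 \<and>
        eord G (last z) v1 v2)"

definition min_path :: "('a, 'b) eograph_scheme \<Rightarrow> 'a \<Rightarrow> 'a \<Rightarrow> 'a list" where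
  "min_path G u v = (THE p. p \<in> proper_paths G u v \<and>
       (\<forall>q \<in> proper_paths G u v. q \<noteq> p \<longrightarrow> path_less G p q))"

definition fin_conn_graph :: "('a, 'b) eograph_scheme \<Rightarrow> bool" where
  "fin_conn_graph G \<longleftrightarrow> pointed_eo_graph G \<and> finite (verts G) \<and> connected_graph G"

definition arborescence :: "('a, 'b) eograph_scheme \<Rightarrow> bool" where
  "arborescence G \<longleftrightarrow> (\<forall>u\<in>verts G. \<exists>!p. p \<in> paths_from_to G (root G) u)"

definition fin_arb :: "('a, 'b) eograph_scheme \<Rightarrow> bool" where
  "fin_arb G \<longleftrightarrow> pointed_eo_graph G \<and> finite (verts G) \<and> arborescence G"

definition eo_hom :: "('a, 'c) eograph_scheme \<Rightarrow> ('b, 'd) eograph_scheme \<Rightarrow> ('a \<Rightarrow> 'b) \<Rightarrow> bool" where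
  "eo_hom G H h \<longleftrightarrow>
     (\<forall>u\<in>verts G. h u \<in> verts H) \<and>
     (\<forall>u v. (u, v) \<in> arcs G \<longrightarrow> (h u, h v) \<in> arcs H) \<and>
     (\<forall>u\<in>verts G. h u = root H \<longleftrightarrow> u = root G) \<and>
     (\<forall>u v1 v2. eord G u v1 v2 \<longrightarrow> eord H (h u) (h v1) (h v2))"

definition lex_hom :: "('a, 'c) eograph_scheme \<Rightarrow> ('b, 'd) eograph_scheme \<Rightarrow> ('a \<Rightarrow> 'b) \<Rightarrow> bool" where
  "lex_hom G H h \<longleftrightarrow> eo_hom G H h \<and>
     (\<forall>u\<in>verts G. \<forall>v\<in>verts G. proper_paths G u v \<noteq> {} \<longrightarrow>
        map h (min_path G u v) = min_path H (h u) (h v))"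

definition theta_arcs :: "('a, 'b) eograph_scheme \<Rightarrow> ('a \<times> 'a) set" where
  "theta_arcs G = {(u, v). v \<in> verts G \<and>
      (\<exists>i. Suc i < length (min_path G (root G) v) \<and>
           min_path G (root G) v ! i = u \<and> min_path G (root G) v ! Suc i = v)}"

definition Theta :: "('a, 'b) eograph_scheme \<Rightarrow> 'a eograph" where
  "Theta G = \<lparr> verts = verts G, arcs = theta_arcs G, root = root G,
     eord = (\<lambda>u v1 v2. eord G u v1 v2 \<and> (u, v1) \<in> theta_arcs G \<and> (u, v2) \<in> theta_arcs G) \<rparr>"

end

theory Submission
  imports Defs
begin

text \<open>On co-initial paths the lexicographic order is a strict total order, so in a finite
  graph there is a least proper path min(u ~> v) as soon as there is any proper path. Least
  paths are closed under prefixes: if a proper path q to a vertex w on m = min(u ~> v) were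
  below the prefix of m ending in w, then following q until it first meets the remainder of m
  and continuing along m would give a proper path below m. Hence the least paths from the
  root are exactly the root paths of the graph formed by their last edges, which is therefore
  an arborescence; and a lex-homomorphism, which maps least paths to least paths, maps last
  edges to last edges.\<close>

lemma successivelyI:
  "(\<And>ys a b zs. xs = ys @ a # b # zs \<Longrightarrow> P a b) \<Longrightarrow> successively P xs"
  by (induction xs rule: induct_list012) (simp_all, metis append_Cons append_Nil)

lemma snoc_extends_if_notin_prefix:
  assumes "z @ y # r = a @ x # b" "x \<notin> set z"
  shows "\<exists>t. a @ [x] = z @ y # t"
proof -
  obtain us where "z = a @ us \<and> us @ y # r = x # b \<or> z @ us = a \<and> y # r = us @ x # b"
    using assms(1) by (auto simp: append_eq_append_conv2)
  then show ?thesis using assms(2) by (cases us) auto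
qed

lemma set_subset_if_append_Cons_eq_snoc: "z @ b # r = xs @ [w] \<Longrightarrow> set z \<subseteq> set xs"
  by (cases r rule: rev_cases) auto

lemma common_prefix_cases:
  assumes "z @ v # r = z' @ v' # r'"
  obtains "z = z'" "v = v'" | us where "z = z' @ v' # us" | us where "z' = z @ v # us"
proof -
  obtain us where "z = z' @ us \<and> us @ v # r = v' # r' \<or> z @ us = z' \<and> v # r = us @ v' # r'"
    using assms by (auto simp: append_eq_append_conv2)
  then show ?thesis using that by (cases us) auto
qed

subsection \<open>Paths\<close>

lemma is_path_iff_successively:
  "is_path G p \<longleftrightarrow> p \<noteq> [] \<and> set p \<subseteq> verts G \<and> successively (\<lambda>x y. (x, y) \<in> arcs G) p"
  unfolding is_path_def successively_conv_nth by simp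

lemma is_path_appendD:
  assumes "is_path G (xs @ ys)"
  shows "xs \<noteq> [] \<Longrightarrow> is_path G xs" and "ys \<noteq> [] \<Longrightarrow> is_path G ys"
  using assms by (auto simp: is_path_iff_successively successively_append_iff)

lemma is_path_last_arc:
  "is_path G (xs @ y # ys) \<Longrightarrow> xs \<noteq> [] \<Longrightarrow> (last xs, y) \<in> arcs G"
  by (auto simp: is_path_iff_successively successively_append_iff)

lemma is_path_join:
  "is_path G (xs @ [x]) \<Longrightarrow> is_path G (x # ys) \<Longrightarrow> is_path G (xs @ x # ys)"
  by (auto simp: is_path_iff_successively successively_append_iff)

lemma first_meet_path:
  assumes "is_path G q" "is_path G s" "set q \<inter> set s \<noteq> {}"
  obtains a x b c d where "q = a @ x # b" "s = c @ x # d" "set a \<inter> set s = {}"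
    "is_path G (a @ x # d)"
proof -
  obtain a x b where q: "q = a @ x # b" "x \<in> set s" "\<forall>y\<in>set a. y \<notin> set s"
    using split_list_first_prop[of q "\<lambda>y. y \<in> set s"] assms(3) by blast
  obtain c d where s: "s = c @ x # d" using q(2) split_list by metis
  have "is_path G (a @ [x])" using is_path_appendD(1)[of G "a @ [x]" b] assms(1) q(1) by simp
  moreover have "is_path G (x # d)" using is_path_appendD(2) assms(2) s by blast
  ultimately have "is_path G (a @ x # d)" by (rule is_path_join)
  then show ?thesis using that[OF q(1) s] q(3) by blast
qed

lemma mem_proper_paths_iff:
  "p \<in> proper_paths G u v \<longleftrightarrow> is_path G p \<and> distinct p \<and> hd p = u \<and> last p = v"
  unfolding proper_paths_def paths_from_to_def by auto

lemma finite_proper_paths: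
  assumes "finite (verts G)"
  shows "finite (proper_paths G u v)"
  by (rule finite_subset[OF _ finite_subset_distinct[OF assms]])
    (auto simp: mem_proper_paths_iff is_path_def)

lemma is_path_remove_cycles:
  "is_path G p \<Longrightarrow> \<exists>q. is_path G q \<and> distinct q \<and> hd q = hd p \<and> last q = last p"
proof (induction "length p" arbitrary: p rule: less_induct)
  case less
  show ?case
  proof (cases "distinct p")
    case False
    then obtain xs y ys zs where p: "p = xs @ [y] @ ys @ [y] @ zs"
      using not_distinct_decomp by blast
    have "is_path G (xs @ y # zs)"
      using less.prems unfolding p
      by (auto simp: is_path_iff_successively successively_append_iff successively_Cons
          split: if_splits)
    then show ?thesis using less.hyps[of "xs @ y # zs"] by (auto simp: p hd_append)
  qed (use less.prems in blast)
qed

lemma connected_proper_paths_nonempty: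
  assumes "connected_graph G" "v \<in> verts G"
  shows "proper_paths G (root G) v \<noteq> {}"
proof -
  obtain p where "is_path G p" "hd p = root G" "last p = v"
    using assms unfolding connected_graph_def paths_from_to_def by blast
  then obtain q where "q \<in> proper_paths G (root G) v"
    using is_path_remove_cycles[of G p] by (auto simp: mem_proper_paths_iff)
  then show ?thesis by blast
qed

subsection \<open>The lexicographic path order\<close>

lemma eord_arcs:
  "pointed_eo_graph G \<Longrightarrow> eord G u a b \<Longrightarrow> (u, a) \<in> arcs G \<and> (u, b) \<in> arcs G"
  unfolding pointed_eo_graph_def by blast

lemma strict_linear_nbhd:
  "pointed_eo_graph G \<Longrightarrow> (u, a) \<in> arcs G \<Longrightarrow> strict_linear_on (nbhd G u) (eord G u)"
  unfolding pointed_eo_graph_def by blast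

lemma eord_irrefl: "pointed_eo_graph G \<Longrightarrow> \<not> eord G u a a"
  using eord_arcs strict_linear_nbhd unfolding strict_linear_on_def nbhd_def by fast

lemma eord_trans:
  "pointed_eo_graph G \<Longrightarrow> eord G u a b \<Longrightarrow> eord G u b c \<Longrightarrow> eord G u a c"
  using eord_arcs[of G u] strict_linear_nbhd[of G u]
  unfolding strict_linear_on_def nbhd_def by blast

lemma eord_total:
  "pointed_eo_graph G \<Longrightarrow> (u, a) \<in> arcs G \<Longrightarrow> (u, b) \<in> arcs G \<Longrightarrow> a \<noteq> b \<Longrightarrow>
     eord G u a b \<or> eord G u b a"
  using strict_linear_nbhd[of G u a] unfolding strict_linear_on_def nbhd_def by blast

definition fork_less :: "('a, 'b) eograph_scheme \<Rightarrow> 'a list \<Rightarrow> 'a list \<Rightarrow> bool" where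
  "fork_less G p q \<longleftrightarrow> (\<exists>z v1 v2 r1 r2. z \<noteq> [] \<and> p = z @ v1 # r1 \<and> q = z @ v2 # r2 \<and>
     eord G (last z) v1 v2)"

lemma path_less_iff: "path_less G p q \<longleftrightarrow> strict_prefix p q \<or> fork_less G p q"
  unfolding path_less_def fork_less_def ..

lemma fork_lessI:
  "z \<noteq> [] \<Longrightarrow> eord G (last z) v1 v2 \<Longrightarrow> fork_less G (z @ v1 # r1) (z @ v2 # r2)"
  unfolding fork_less_def by blast

lemma fork_less_irrefl: "pointed_eo_graph G \<Longrightarrow> \<not> fork_less G p p"
  unfolding fork_less_def using eord_irrefl by fastforce

lemma fork_less_append_right: "fork_less G p q \<Longrightarrow> fork_less G p (q @ t)"
  unfolding fork_less_def by fastforce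

lemma strict_prefix_fork_less:
  assumes "strict_prefix p q" "fork_less G q r"
  shows "path_less G p r"
proof -
  obtain z v2 v3 r2 r3 where z: "z \<noteq> []" "q = z @ v2 # r2" "r = z @ v3 # r3"
    and e: "eord G (last z) v2 v3"
    using assms(2) unfolding fork_less_def by blast
  have "prefix p z \<or> (\<exists>us. p = z @ us \<and> prefix us (v2 # r2))"
    using assms(1) z(2) prefix_append[of p z "v2 # r2"] by (simp add: strict_prefix_def)
  then consider "prefix p z" | s where "p = z @ v2 # s"
    by (auto simp: prefix_Cons)
  then show ?thesis
  proof cases
    case 1
    have "strict_prefix p r"
      using prefix_order.le_less_trans[OF 1 strict_prefixI'[OF z(3)]] .
    then show ?thesis by (simp add: path_less_iff)
  next
    case (2 s)
    then show ?thesis using z e by (simp add: path_less_iff fork_lessI)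
  qed
qed

lemma fork_less_trans:
  assumes G: "pointed_eo_graph G" and "fork_less G p q" "fork_less G q r"
  shows "fork_less G p r"
proof -
  obtain z v1 v2 r1 r2 where z: "z \<noteq> []" "p = z @ v1 # r1" "q = z @ v2 # r2"
    and e: "eord G (last z) v1 v2"
    using assms(2) unfolding fork_less_def by blast
  obtain z' w2 w3 s2 s3 where z': "z' \<noteq> []" "q = z' @ w2 # s2" "r = z' @ w3 # s3"
    and e': "eord G (last z') w2 w3"
    using assms(3) unfolding fork_less_def by blast
  from z(3) z'(2) have "z @ v2 # r2 = z' @ w2 # s2" by simp
  then show ?thesis
  proof (cases rule: common_prefix_cases)
    case 1
    then show ?thesis using z z' eord_trans[OF G e] e' fork_lessI by metis
  next
    case (2 us)
    then have "p = z' @ w2 # (us @ v1 # r1)" using z(2) by simp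
    then show ?thesis using z'(1,3) e' fork_lessI by metis
  next
    case (3 us)
    then have "r = z @ v2 # (us @ w3 # s3)" using z'(3) by simp
    then show ?thesis using z(1,2) e fork_lessI by metis
  qed
qed

lemma path_less_irrefl: "pointed_eo_graph G \<Longrightarrow> \<not> path_less G p p"
  by (simp add: path_less_iff fork_less_irrefl)

lemma path_less_trans:
  assumes G: "pointed_eo_graph G" and pq: "path_less G p q" and qr: "path_less G q r"
  shows "path_less G p r"
  using pq qr unfolding path_less_iff[of G p q] path_less_iff[of G q r]
proof (elim disjE)
  assume "strict_prefix p q" "strict_prefix q r"
  then show ?thesis by (simp add: path_less_iff prefix_order.less_trans[of p q r])
next
  assume "strict_prefix p q" "fork_less G q r"
  then show ?thesis by (rule strict_prefix_fork_less)
next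
  assume "fork_less G p q" "strict_prefix q r"
  then show ?thesis by (auto simp: path_less_iff strict_prefix_def prefix_def fork_less_append_right)
next
  assume "fork_less G p q" "fork_less G q r"
  then show ?thesis by (simp add: path_less_iff fork_less_trans[OF G])
qed

lemma path_less_total:
  assumes G: "pointed_eo_graph G" and "is_path G p" "is_path G q" "hd p = hd q" "p \<noteq> q"
  shows "path_less G p q \<or> path_less G q p"
proof (cases p q rule: prefix_cases)
  case 3
  then obtain z a r b s where d: "a \<noteq> b" "p = z @ a # r" "q = z @ b # s"
    using parallel_decomp by blast
  have "z \<noteq> []" using d assms(4) by auto
  moreover have "eord G (last z) a b \<or> eord G (last z) b a"
    using eord_total[OF G] is_path_last_arc assms(2,3) d \<open>z \<noteq> []\<close> by metis
  ultimately show ?thesis using d fork_lessI path_less_iff by metis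
qed (use assms(5) in \<open>auto simp: path_less_iff strict_prefix_def\<close>)

subsection \<open>Least proper paths\<close>

lemma finite_has_least_wrt:
  assumes "finite S" "S \<noteq> {}"
    and "\<forall>x\<in>S. \<forall>y\<in>S. \<forall>z\<in>S. r x y \<longrightarrow> r y z \<longrightarrow> r x z"
    and "\<forall>x\<in>S. \<forall>y\<in>S. x \<noteq> y \<longrightarrow> r x y \<or> r y x"
  shows "\<exists>m\<in>S. \<forall>q\<in>S. q \<noteq> m \<longrightarrow> r m q"
  using assms
proof (induction S rule: finite_ne_induct)
  case (insert x S)
  have "\<forall>x\<in>S. \<forall>y\<in>S. \<forall>z\<in>S. r x y \<longrightarrow> r y z \<longrightarrow> r x z"
    "\<forall>x\<in>S. \<forall>y\<in>S. x \<noteq> y \<longrightarrow> r x y \<or> r y x"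
    using insert.prems by blast+
  then obtain m where m: "m \<in> S" "\<forall>q\<in>S. q \<noteq> m \<longrightarrow> r m q"
    using insert.IH by blast
  show ?case
  proof (cases "r x m")
    case True
    have "r x q" if "q \<in> S" for q
      using True m that insert.prems(1) by (cases "q = m") blast+
    then show ?thesis by blast
  next
    case False
    then have "r m x" using m insert.prems(2) insert.hyps(3) by (metis insertCI)
    then show ?thesis using m by blast
  qed
qed simp

definition least_proper_path :: "('a, 'b) eograph_scheme \<Rightarrow> 'a \<Rightarrow> 'a \<Rightarrow> 'a list \<Rightarrow> bool" where
  "least_proper_path G u v p \<longleftrightarrow> p \<in> proper_paths G u v \<and>
     (\<forall>q\<in>proper_paths G u v. q \<noteq> p \<longrightarrow> path_less G p q)"

lemma least_proper_path_unique:
  assumes G: "pointed_eo_graph G" and "least_proper_path G u v p" "least_proper_path G u v p'"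
  shows "p = p'"
proof (rule ccontr)
  assume "p \<noteq> p'"
  then have "path_less G p p'" "path_less G p' p"
    using assms unfolding least_proper_path_def by auto
  then show False using path_less_trans[OF G] path_less_irrefl[OF G] by blast
qed

lemma least_proper_path_exists:
  assumes G: "pointed_eo_graph G" and "finite (verts G)" "proper_paths G u v \<noteq> {}"
  shows "\<exists>p. least_proper_path G u v p"
proof -
  let ?P = "proper_paths G u v"
  have "\<forall>p\<in>?P. \<forall>q\<in>?P. \<forall>r\<in>?P. path_less G p q \<longrightarrow> path_less G q r \<longrightarrow> path_less G p r"
    using path_less_trans[OF G] by blast
  moreover have "\<forall>p\<in>?P. \<forall>q\<in>?P. p \<noteq> q \<longrightarrow> path_less G p q \<or> path_less G q p"
    using path_less_total[OF G] mem_proper_paths_iff by metis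
  ultimately show ?thesis
    using finite_has_least_wrt[OF finite_proper_paths[OF assms(2)] assms(3)]
    unfolding least_proper_path_def by blast
qed

lemma min_path_eqI:
  assumes G: "pointed_eo_graph G" and p: "least_proper_path G u v p"
  shows "min_path G u v = p"
proof -
  have "min_path G u v = (THE p. least_proper_path G u v p)"
    unfolding min_path_def least_proper_path_def ..
  also have "\<dots> = p"
    using p least_proper_path_unique[OF G _ p] by (rule the_equality)
  finally show ?thesis .
qed

lemma min_path_least:
  assumes "pointed_eo_graph G" "finite (verts G)" "proper_paths G u v \<noteq> {}"
  shows "least_proper_path G u v (min_path G u v)"
proof -
  obtain p where "least_proper_path G u v p"
    using least_proper_path_exists[OF assms] by blast
  then show ?thesis using min_path_eqI[OF assms(1)] by simp
qed

lemma fork_below_least_path_prefix_absurd: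
  assumes G: "pointed_eo_graph G" and m: "least_proper_path G u v (xs @ w # ys)"
    and q: "q \<in> proper_paths G u w" and fork: "fork_less G q (xs @ [w])"
  shows False
proof -
  have mp: "is_path G (xs @ w # ys)" "distinct (xs @ w # ys)" "last (xs @ w # ys) = v"
    using m unfolding least_proper_path_def mem_proper_paths_iff by auto
  have qp: "is_path G q" "distinct q" "hd q = u" "last q = w"
    using q unfolding mem_proper_paths_iff by auto
  obtain z a r b r' where z: "z \<noteq> []" "q = z @ a # r" "xs @ [w] = z @ b # r'"
    and ab: "eord G (last z) a b"
    using fork unfolding fork_less_def by blast
  let ?s = "w # ys"
  have "is_path G ?s" using is_path_appendD(2) mp(1) by blast
  moreover have "w \<in> set q \<inter> set ?s" using qp(1,4) by (auto simp: is_path_def)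
  ultimately obtain a' x b' c d where x: "q = a' @ x # b'" "?s = c @ x # d"
    "set a' \<inter> set ?s = {}" and np: "is_path G (a' @ x # d)"
    using first_meet_path qp(1) by (metis empty_iff)
  have "x \<notin> set z"
    using set_subset_if_append_Cons_eq_snoc[OF z(3)[symmetric]] mp(2) x(2) by auto
  then obtain t where t: "a' @ [x] = z @ a # t"
    using snoc_extends_if_notin_prefix z(2) x(1) by metis
  let ?n = "a' @ x # d"
  have "fork_less G ?n (xs @ w # ys)"
    using fork_lessI[OF z(1) ab, of "t @ d" "r' @ ys"] t z(3)
    by (metis append.assoc append_Cons append_Nil)
  moreover have "?n \<in> proper_paths G u v"
  proof -
    have "distinct ?n" using qp(2) mp(2) x by auto
    moreover have "hd ?n = u" using qp(3) x(1) by (cases a') auto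
    moreover have "last ?n = v"
      using mp(3) x(2) by (metis last_ConsR last_append last_appendR list.distinct(1))
    ultimately show ?thesis using np by (simp add: mem_proper_paths_iff)
  qed
  ultimately show False
    using m path_less_iff path_less_trans[OF G] path_less_irrefl[OF G]
    unfolding least_proper_path_def by metis
qed

lemma least_proper_path_prefix:
  assumes G: "pointed_eo_graph G" and m: "least_proper_path G u v (xs @ w # ys)"
  shows "least_proper_path G u w (xs @ [w])"
proof -
  have mp: "is_path G (xs @ w # ys)" "distinct (xs @ w # ys)" "hd (xs @ w # ys) = u"
    using m unfolding least_proper_path_def mem_proper_paths_iff by auto
  then have p: "xs @ [w] \<in> proper_paths G u w"
    using is_path_appendD(1)[of G "xs @ [w]" ys] by (cases xs) (auto simp: mem_proper_paths_iff)
  have "path_less G (xs @ [w]) q" if q: "q \<in> proper_paths G u w" "q \<noteq> xs @ [w]" for q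
  proof (rule ccontr)
    assume "\<not> path_less G (xs @ [w]) q"
    then have "strict_prefix q (xs @ [w]) \<or> fork_less G q (xs @ [w])"
      using path_less_total[OF G, of q "xs @ [w]"] p q
      by (auto simp: mem_proper_paths_iff path_less_iff)
    moreover have "\<not> strict_prefix q (xs @ [w])"
    proof
      assume "strict_prefix q (xs @ [w])"
      then have "prefix q xs" by (auto simp: strict_prefix_def)
      then have "w \<in> set xs"
        using q(1) set_mono_prefix by (fastforce simp: mem_proper_paths_iff is_path_def)
      then show False using mp(2) by simp
    qed
    ultimately show False using fork_below_least_path_prefix_absurd[OF G m q(1)] by blast
  qed
  then show ?thesis using p unfolding least_proper_path_def by blast
qed

lemma min_path_prefix:
  assumes "pointed_eo_graph G" "finite (verts G)" "proper_paths G u v \<noteq> {}"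
    and "min_path G u v = xs @ w # ys"
  shows "min_path G u w = xs @ [w]"
  using min_path_eqI least_proper_path_prefix min_path_least assms by metis

subsection \<open>The arborescence of least root paths\<close>

lemma Theta_simps [simp]:
  "verts (Theta G) = verts G" "arcs (Theta G) = theta_arcs G" "root (Theta G) = root G"
  "eord (Theta G) u v1 v2 \<longleftrightarrow> eord G u v1 v2 \<and> (u, v1) \<in> theta_arcs G \<and> (u, v2) \<in> theta_arcs G"
  unfolding Theta_def by simp_all

lemma theta_arcsI:
  "b \<in> verts G \<Longrightarrow> min_path G (root G) b = xs @ [a, b] \<Longrightarrow> (a, b) \<in> theta_arcs G"
  unfolding theta_arcs_def by (auto intro!: exI[of _ "length xs"] simp: nth_append)

lemma strict_linear_on_subset:
  assumes "strict_linear_on A r" "B \<subseteq> A" "\<And>x y. x \<in> B \<Longrightarrow> y \<in> B \<Longrightarrow> r' x y \<longleftrightarrow> r x y"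
  shows "strict_linear_on B r'"
  using assms unfolding strict_linear_on_def by (simp add: subset_iff) blast

locale finite_connected_eograph =
  fixes G :: "('a, 'b) eograph_scheme"
  assumes fin_conn: "fin_conn_graph G"
begin

lemma pointed: "pointed_eo_graph G"
  and finite_verts: "finite (verts G)"
  and connected: "connected_graph G"
  using fin_conn unfolding fin_conn_graph_def by auto

lemma root_in_verts: "root G \<in> verts G"
  using pointed unfolding pointed_eo_graph_def by blast

abbreviation root_path :: "'a \<Rightarrow> 'a list" where
  "root_path v \<equiv> min_path G (root G) v"

lemma root_path_proper: "v \<in> verts G \<Longrightarrow> root_path v \<in> proper_paths G (root G) v"
  using min_path_least[OF pointed finite_verts connected_proper_paths_nonempty[OF connected]]
  unfolding least_proper_path_def by blast

lemma root_path_prefix: "v \<in> verts G \<Longrightarrow> root_path v = xs @ w # ys \<Longrightarrow> root_path w = xs @ [w]"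
  using min_path_prefix[OF pointed finite_verts connected_proper_paths_nonempty[OF connected]] .

lemma root_path_root: "root_path (root G) = [root G]"
proof -
  have "root_path (root G) \<noteq> []" "hd (root_path (root G)) = root G"
    using root_path_proper[OF root_in_verts] by (auto simp: mem_proper_paths_iff is_path_def)
  then have "root_path (root G) = [] @ root G # tl (root_path (root G))"
    by (cases "root_path (root G)") auto
  from root_path_prefix[OF root_in_verts this] show ?thesis by simp
qed

lemma theta_arcs_iff: "(a, b) \<in> theta_arcs G \<longleftrightarrow> b \<in> verts G \<and> (\<exists>xs. root_path b = xs @ [a, b])"
proof
  assume "(a, b) \<in> theta_arcs G"
  then obtain i where b: "b \<in> verts G" "Suc i < length (root_path b)"
    "root_path b ! i = a" "root_path b ! Suc i = b"
    unfolding theta_arcs_def by blast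
  then have "root_path b = take (Suc i) (root_path b) @ b # drop (Suc (Suc i)) (root_path b)"
    by (metis id_take_nth_drop)
  then have "root_path b = take (Suc i) (root_path b) @ [b]"
    using root_path_prefix[OF b(1)] by metis
  moreover have "take (Suc i) (root_path b) = take i (root_path b) @ [a]"
    using b(2,3) by (simp add: take_Suc_conv_app_nth)
  ultimately show "b \<in> verts G \<and> (\<exists>xs. root_path b = xs @ [a, b])"
    using b(1) by auto
next
  assume "b \<in> verts G \<and> (\<exists>xs. root_path b = xs @ [a, b])"
  then show "(a, b) \<in> theta_arcs G" using theta_arcsI[of b G] by blast
qed

lemma theta_arc_root_path:
  assumes "(a, b) \<in> theta_arcs G"
  shows "root_path b = root_path a @ [b]"
proof -
  obtain xs where b: "b \<in> verts G" "root_path b = xs @ a # [b]"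
    using assms unfolding theta_arcs_iff by auto
  then show ?thesis using root_path_prefix[OF b] by simp
qed

lemma theta_arcs_subset: "theta_arcs G \<subseteq> arcs G"
proof clarify
  fix a b assume "(a, b) \<in> theta_arcs G"
  then obtain xs where b: "b \<in> verts G" "root_path b = (xs @ [a]) @ [b]"
    unfolding theta_arcs_iff by auto
  then show "(a, b) \<in> arcs G"
    using root_path_proper[OF b(1)] is_path_last_arc[of G "xs @ [a]" b "[]"]
    by (simp add: mem_proper_paths_iff)
qed

lemma root_path_theta_path: "v \<in> verts G \<Longrightarrow> is_path (Theta G) (root_path v)"
proof -
  assume v: "v \<in> verts G"
  then have p: "is_path G (root_path v)" using root_path_proper by (simp add: mem_proper_paths_iff)
  have "(a, b) \<in> theta_arcs G" if "root_path v = ys @ a # b # zs" for ys a b zs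
  proof -
    have "b \<in> verts G" using p that by (auto simp: is_path_def)
    moreover have "root_path b = ys @ [a, b]"
      using root_path_prefix[OF v, of "ys @ [a]" b zs] that by simp
    ultimately show ?thesis by (auto simp: theta_arcs_iff)
  qed
  then show ?thesis using p by (auto simp: is_path_iff_successively intro: successivelyI)
qed

lemma theta_path_eq_root_path: "is_path (Theta G) p \<Longrightarrow> hd p = root G \<Longrightarrow> p = root_path (last p)"
proof (induction p rule: rev_induct)
  case (snoc x p)
  show ?case
  proof (cases "p = []")
    case True
    then show ?thesis using snoc.prems(2) root_path_root by simp
  next
    case False
    then have "is_path (Theta G) p" "(last p, x) \<in> theta_arcs G"
      using snoc.prems(1) is_path_appendD(1) is_path_last_arc[of "Theta G" p x "[]"] by auto
    moreover have "hd p = root G" using snoc.prems(2) False by simp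
    ultimately show ?thesis using snoc.IH theta_arc_root_path by simp
  qed
qed (simp add: is_path_def)

lemma Theta_fin_arb: "fin_arb (Theta G)"
  unfolding fin_arb_def
proof (intro conjI)
  show "finite (verts (Theta G))" using finite_verts by simp
  show "pointed_eo_graph (Theta G)"
    unfolding pointed_eo_graph_def
  proof (intro conjI ballI allI impI)
    show "arcs (Theta G) \<subseteq> verts (Theta G) \<times> verts (Theta G)"
      using theta_arcs_subset pointed unfolding pointed_eo_graph_def by auto
    fix u assume "u \<in> verts (Theta G)"
    then have "strict_linear_on (nbhd G u) (eord G u)"
      using pointed unfolding pointed_eo_graph_def by simp
    then show "strict_linear_on (nbhd (Theta G) u) (eord (Theta G) u)"
      by (rule strict_linear_on_subset) (use theta_arcs_subset in \<open>auto simp: nbhd_def\<close>)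
  qed (use root_in_verts in simp_all)
  show "arborescence (Theta G)"
    unfolding arborescence_def
  proof
    fix v assume v: "v \<in> verts (Theta G)"
    show "\<exists>!p. p \<in> paths_from_to (Theta G) (root (Theta G)) v"
    proof (rule ex1I)
      show "root_path v \<in> paths_from_to (Theta G) (root (Theta G)) v"
        using v root_path_theta_path root_path_proper
        by (simp add: paths_from_to_def mem_proper_paths_iff)
    next
      fix p assume "p \<in> paths_from_to (Theta G) (root (Theta G)) v"
      then show "p = root_path v"
        using theta_path_eq_root_path by (auto simp: paths_from_to_def)
    qed
  qed
qed

end

subsection \<open>Functoriality\<close>

lemma lex_hom_root_path:
  assumes G: "fin_conn_graph G" and h: "lex_hom G H h" and v: "v \<in> verts G"
  shows "map h (min_path G (root G) v) = min_path H (root H) (h v)"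
proof -
  interpret G: finite_connected_eograph G by (rule finite_connected_eograph.intro[OF G])
  have "h (root G) = root H"
    using h G.root_in_verts unfolding lex_hom_def eo_hom_def by blast
  then show ?thesis
    using h G.root_in_verts v connected_proper_paths_nonempty[OF G.connected v]
    unfolding lex_hom_def by metis
qed

lemma lex_hom_theta_arcs:
  assumes G: "fin_conn_graph G" and h: "lex_hom G H h" and ab: "(a, b) \<in> theta_arcs G"
  shows "(h a, h b) \<in> theta_arcs H"
proof -
  interpret G: finite_connected_eograph G by (rule finite_connected_eograph.intro[OF G])
  obtain xs where b: "b \<in> verts G" "G.root_path b = xs @ [a, b]"
    using ab unfolding G.theta_arcs_iff by blast
  then have "min_path H (root H) (h b) = map h xs @ [h a, h b]"
    using lex_hom_root_path[OF G h b(1)] by simp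
  moreover have "h b \<in> verts H" using h b(1) unfolding lex_hom_def eo_hom_def by blast
  ultimately show ?thesis by (rule theta_arcsI[rotated])
qed

lemma Theta_eo_hom:
  assumes "fin_conn_graph G" "lex_hom G H h"
  shows "eo_hom (Theta G) (Theta H) h"
  using assms(2) lex_hom_theta_arcs[OF assms]
  unfolding lex_hom_def eo_hom_def by simp

theorem lemma10p3:
  fixes G :: "'a eograph" and H :: "'b eograph" and h :: "'a \<Rightarrow> 'b"
  shows "(fin_conn_graph G \<longrightarrow> fin_arb (Theta G)) \<and>
         (fin_conn_graph G \<and> fin_conn_graph H \<and> lex_hom G H h \<longrightarrow>
            eo_hom (Theta G) (Theta H) h)"
  using finite_connected_eograph.Theta_fin_arb[OF finite_connected_eograph.intro] Theta_eo_hom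
  by blast

end
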